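(* For every positive integer $n$, \[ \sum_{\pi \in \mathcal{D}(n)} (-1)^{\#(\pi)-1} s(\pi)^2 = 2\sigma(n) - d(n) + 2p^{(2)}(n). \]
   Context: $\mathcal{D}(n)$ is the set of partitions of $n$ into distinct parts; for a partition $\pi$, $s(\pi)$ is its smallest part and $\#(\pi)$ its number of parts. $\sigma(n)=\sum_{d\mid n} d$, $d(n)$ is the number of positive divisors of $n$, and $p^{(2)}(n)$ is the number of partitions of $n$ having exactly two distinct part sizes. *)

theory Defs
  imports Main "HOL-Library.Multiset"
begin

definition distinct_partitions :: "nat \<Rightarrow> nat set set" where
  "distinct_partitions n = {P. finite P \<and> 0 \<notin> P \<and> \<Sum>P = n}"

definition spart :: "nat set \<Rightarrow> nat" where "spart P = Min P"
definition nparts :: "nat set \<Rightarrow> nat" where "nparts P = card P"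

definition partitions :: "nat \<Rightarrow> nat multiset set" where
  "partitions n = {M. 0 \<notin># M \<and> sum_mset M = n}"

definition p2 :: "nat \<Rightarrow> nat" where
  "p2 n = card {M \<in> partitions n. card (set_mset M) = 2}"

definition sigma :: "nat \<Rightarrow> nat" where "sigma n = \<Sum>{d. d dvd n}"
definition ndiv :: "nat \<Rightarrow> nat" where "ndiv n = card {d. d dvd n}"

end

(*
  With phi_s = q^s (1 - q^(s+1)) ... (1 - q^N), the coefficient of q^n in phi_s (for N = n) is
  the signed number of distinct partitions of n with smallest part s, so the left-hand side is
  the coefficient of q^n in the second moment sum s^2 phi_s, i.e. in (x d/dx)^2 Phi at x = 1,
  where Phi(x) = sum phi_s x^s. Comparing coefficients of x gives
  Phi(x) (1 - q x) = Phi(q x) - (q x)^(N+1); iterating, Phi(x) (1 - q x) ... (1 - q^N x) is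
  congruent to Phi(q^N x), hence to the Euler product E = (1 - q) ... (1 - q^N), modulo q^(N+1).
  Differentiating twice at x = 1 and cancelling the unit E gives, modulo q^(N+1),
  sum s^2 phi_s = 2 L^2 - M + L = M + 2 S + L, where L = sum_a r_a, S = sum_a r_a^2,
  M = sum over a <> c of r_a r_c, and r_a = q^a / (1 - q^a).
  Finally, [q^n] M counts the partitions of n with two part sizes once for each ordering of
  the sizes, so it is 2 p2(n), and [q^n] (2 S + L) is the sum over a | n of 2 (n/a - 1) + 1,
  which is 2 sigma(n) - d(n).
*)

theory Submission
  imports Defs "HOL-Computational_Algebra.Polynomial" "HOL-Computational_Algebra.Formal_Power_Series"
begin

unbundle fps_syntax

lemma coeff_pcompose_scale: "coeff (pcompose p [:0, c:]) t = coeff p t * c ^ t"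
  for p :: "'a::comm_semiring_1 poly"
proof (induction p arbitrary: t)
  case (pCons a p)
  then show ?case by (cases t) (simp_all add: pcompose_pCons coeff_pCons mult_ac)
qed simp

lemma pcompose_scale_scale: "pcompose (pcompose p [:0, a:]) [:0, b:] = pcompose p [:0, a * b:]"
  for p :: "'a::comm_semiring_1 poly"
  by (rule poly_eqI) (simp add: coeff_pcompose_scale power_mult_distrib mult.assoc)

lemma pcompose_monom_scale: "pcompose (monom a n) [:0, c:] = monom (a * c ^ n) n"
  for a c :: "'a::comm_semiring_1"
  by (rule poly_eqI) (simp add: coeff_pcompose_scale)

lemma const_dvd_monom: "c dvd a \<Longrightarrow> [:c:] dvd monom a n"
  for a c :: "'a::comm_semiring_1"
proof -
  assume "c dvd a"
  then obtain b where "a = c * b" ..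
  then have "monom a n = [:c:] * monom b n" by (simp add: smult_monom)
  then show ?thesis by (metis dvd_triv_left)
qed

lemma const_dvd_poly: "[:c:] dvd p \<Longrightarrow> c dvd poly p x"
  for p :: "'a::idom poly"
  by (elim dvdE) simp

lemma const_dvd_pderiv: "[:c:] dvd p \<Longrightarrow> [:c:] dvd pderiv p"
  for p :: "'a::idom poly"
proof -
  assume "[:c:] dvd p"
  then obtain r where "p = [:c:] * r" ..
  then have "pderiv p = [:c:] * pderiv r" by (simp add: pderiv_smult)
  then show ?thesis by (metis dvd_triv_left)
qed

lemma pderiv_sum: "pderiv (\<Sum>x\<in>A. f x) = (\<Sum>x\<in>A. pderiv (f x))"
  using higher_pderiv_sum[of 1 f A] by simp

lemma pderiv_pderiv_mult:
  "pderiv (pderiv (f * g)) = pderiv (pderiv f) * g + 2 * (pderiv f * pderiv g) + f * pderiv (pderiv g)"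
  for f g :: "'a::idom poly"
  by (simp add: pderiv_mult pderiv_add algebra_simps mult_2)

lemma poly_pderiv_monom_sum_at_1:
  fixes a :: "nat \<Rightarrow> 'a::idom"
  shows "poly (pderiv (pderiv (\<Sum>s\<in>S. monom (a s) s))) 1 + poly (pderiv (\<Sum>s\<in>S. monom (a s) s)) 1
    = (\<Sum>s\<in>S. of_nat (s ^ 2) * a s)"
proof -
  have "of_nat (s - 1) * (of_nat s * a s) + of_nat s * a s = of_nat (s ^ 2) * a s" for s
    by (cases s) (simp_all add: power2_eq_square algebra_simps)
  then show ?thesis
    by (simp add: pderiv_sum pderiv_monom poly_sum poly_monom flip: sum.distrib)
qed

lemma prod_diff_singleton_mult:
  fixes b r :: "'i \<Rightarrow> 'a::comm_ring_1"
  assumes "finite K" "a \<in> K" "(1 - b a) * r a = b a"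
  shows "b a * (\<Prod>k\<in>K - {a}. 1 - b k) = r a * (\<Prod>k\<in>K. 1 - b k)"
proof -
  have "r a * (\<Prod>k\<in>K. 1 - b k) = ((1 - b a) * r a) * (\<Prod>k\<in>K - {a}. 1 - b k)"
    using assms(1,2) by (simp add: prod.remove mult_ac)
  then show ?thesis using assms(3) by simp
qed

lemma poly_pderiv_prod_linear_at_1:
  fixes b r :: "'i \<Rightarrow> 'a::idom"
  assumes "finite K" and "\<And>k. k \<in> K \<Longrightarrow> (1 - b k) * r k = b k"
  shows "poly (pderiv (\<Prod>k\<in>K. [:1, - b k:])) 1 = - (\<Prod>k\<in>K. 1 - b k) * (\<Sum>a\<in>K. r a)"
proof -
  have "poly (pderiv (\<Prod>k\<in>K. [:1, - b k:])) 1 = - (\<Sum>a\<in>K. b a * (\<Prod>k\<in>K - {a}. 1 - b k))"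
    by (simp add: pderiv_prod pderiv_pCons poly_sum poly_prod sum_negf)
  also have "\<dots> = - (\<Sum>a\<in>K. r a * (\<Prod>k\<in>K. 1 - b k))"
    using assms by (intro arg_cong[of _ _ uminus] sum.cong refl prod_diff_singleton_mult)
  finally show ?thesis by (simp add: sum_distrib_right mult_ac)
qed

lemma poly_pderiv_pderiv_prod_linear_at_1:
  fixes b r :: "'i \<Rightarrow> 'a::idom"
  assumes "finite K" and "\<And>k. k \<in> K \<Longrightarrow> (1 - b k) * r k = b k"
  shows "poly (pderiv (pderiv (\<Prod>k\<in>K. [:1, - b k:]))) 1
    = (\<Prod>k\<in>K. 1 - b k) * (\<Sum>a\<in>K. \<Sum>c\<in>K - {a}. r a * r c)"
proof -
  have "pderiv (pderiv (\<Prod>k\<in>K. [:1, - b k:])) =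
      (\<Sum>a\<in>K. [:- b a:] * (\<Sum>c\<in>K - {a}. (\<Prod>k\<in>K - {a} - {c}. [:1, - b k:]) * [:- b c:]))"
    by (simp add: pderiv_prod pderiv_pCons pderiv_sum pderiv_mult pderiv_minus pderiv_smult)
  then have "poly (pderiv (pderiv (\<Prod>k\<in>K. [:1, - b k:]))) 1 =
      (\<Sum>a\<in>K. \<Sum>c\<in>K - {a}. ((\<Prod>k\<in>K - {a} - {c}. 1 - b k) * b c) * b a)"
    by (simp add: poly_sum poly_prod sum_distrib_left mult_ac)
  also have "\<dots> = (\<Sum>a\<in>K. \<Sum>c\<in>K - {a}. (\<Prod>k\<in>K. 1 - b k) * (r a * r c))"
  proof (intro sum.cong refl)
    fix a c assume "a \<in> K" "c \<in> K - {a}"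
    then have "b a * (b c * (\<Prod>k\<in>K - {a} - {c}. 1 - b k)) = r c * (b a * (\<Prod>k\<in>K - {a}. 1 - b k))"
      using assms by (simp add: prod_diff_singleton_mult mult.left_commute)
    also have "\<dots> = r c * (r a * (\<Prod>k\<in>K. 1 - b k))"
      using assms \<open>a \<in> K\<close> by (simp add: prod_diff_singleton_mult)
    finally show "((\<Prod>k\<in>K - {a} - {c}. 1 - b k) * b c) * b a = (\<Prod>k\<in>K. 1 - b k) * (r a * r c)"
      by (simp add: mult_ac)
  qed
  finally show ?thesis by (simp add: sum_distrib_left)
qed

text \<open>Evaluating the Leibniz rule at \<open>x = 1\<close> for \<open>f g \<equiv> e\<close> and cancelling the unit \<open>e\<close> gives
  \<open>f(1) \<equiv> 1\<close>, \<open>f'(1) \<equiv> l f(1)\<close> and \<open>f''(1) \<equiv> 2 l f'(1) - m f(1)\<close>.\<close>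

lemma second_moment_cong:
  fixes f g :: "'a::idom poly"
  assumes cong: "[:c:] dvd f * g - [:e:]" and unit: "e * u = 1"
    and g0: "poly g 1 = e" and g1: "poly (pderiv g) 1 = - e * l"
    and g2: "poly (pderiv (pderiv g)) 1 = e * m"
  shows "c dvd poly (pderiv (pderiv f)) 1 + poly (pderiv f) 1 - (2 * l ^ 2 - m + l)"
proof -
  define p0 p1 p2 where "p0 = poly f 1" and "p1 = poly (pderiv f) 1"
    and "p2 = poly (pderiv (pderiv f)) 1"
  have "pderiv (f * g) = pderiv (f * g - [:e:])"
    by (simp add: pderiv_diff pderiv_pCons)
  then have cong1: "[:c:] dvd pderiv (f * g)" and cong2: "[:c:] dvd pderiv (pderiv (f * g))"
    using cong const_dvd_pderiv by metis+
  have "c dvd (p0 * e - e)"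
    using const_dvd_poly[OF cong, of 1] g0 by (simp add: p0_def)
  then have "c dvd (p0 * e - e) * u" by (rule dvd_mult2)
  also have "(p0 * e - e) * u = (p0 - 1) * (e * u)" by (simp add: algebra_simps)
  finally have d0: "c dvd p0 - 1" unfolding unit by simp
  have "c dvd (p1 * e - p0 * (e * l))"
    using const_dvd_poly[OF cong1, of 1] g0 g1 by (simp add: p0_def p1_def pderiv_mult algebra_simps)
  then have "c dvd (p1 * e - p0 * (e * l)) * u" by (rule dvd_mult2)
  also have "(p1 * e - p0 * (e * l)) * u = (p1 - p0 * l) * (e * u)" by (simp add: algebra_simps)
  finally have d1: "c dvd p1 - p0 * l" unfolding unit by simp
  have "c dvd (p2 * e - 2 * p1 * (e * l) + p0 * (e * m))"
    using const_dvd_poly[OF cong2, of 1] g0 g1 g2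
    by (simp add: p0_def p1_def p2_def pderiv_pderiv_mult algebra_simps)
  then have "c dvd (p2 * e - 2 * p1 * (e * l) + p0 * (e * m)) * u" by (rule dvd_mult2)
  also have "(p2 * e - 2 * p1 * (e * l) + p0 * (e * m)) * u = (p2 - 2 * p1 * l + p0 * m) * (e * u)"
    by (simp add: algebra_simps)
  finally have d2: "c dvd p2 - 2 * p1 * l + p0 * m" unfolding unit by simp
  have eq: "p2 + p1 - (2 * l ^ 2 - m + l) =
      (p2 - 2 * p1 * l + p0 * m) - (p0 - 1) * m + (2 * l + 1) * ((p1 - p0 * l) + (p0 - 1) * l)"
    by (simp add: algebra_simps power2_eq_square)
  show ?thesis
    unfolding p1_def[symmetric] p2_def[symmetric] eq
    by (blast intro: dvd_add dvd_diff dvd_mult dvd_mult2 d0 d1 d2)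
qed

lemma sum_offdiag_symmetric:
  fixes f :: "'i::linorder \<Rightarrow> 'i \<Rightarrow> 'a::comm_semiring_1"
  assumes "finite A" and sym: "\<And>a c. f a c = f c a"
  shows "(\<Sum>a\<in>A. \<Sum>c\<in>A - {a}. f a c) = 2 * (\<Sum>a\<in>A. \<Sum>c\<in>{c \<in> A. a < c}. f a c)"
proof -
  have "(\<Sum>c\<in>A - {a}. f a c) = (\<Sum>c\<in>{c \<in> A. a < c}. f a c) + (\<Sum>c\<in>{c \<in> A. c < a}. f a c)" for a
  proof -
    have "(\<Sum>c\<in>A - {a}. f a c) = (\<Sum>c\<in>{c \<in> A. a < c} \<union> {c \<in> A. c < a}. f a c)"
      by (rule sum.cong) auto
    also have "\<dots> = (\<Sum>c\<in>{c \<in> A. a < c}. f a c) + (\<Sum>c\<in>{c \<in> A. c < a}. f a c)"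
      by (rule sum.union_disjoint) (use assms(1) in auto)
    finally show ?thesis .
  qed
  then have "(\<Sum>a\<in>A. \<Sum>c\<in>A - {a}. f a c)
      = (\<Sum>a\<in>A. \<Sum>c\<in>{c \<in> A. a < c}. f a c) + (\<Sum>a\<in>A. \<Sum>c\<in>{c \<in> A. c < a}. f a c)"
    by (simp add: sum.distrib)
  also have "(\<Sum>a\<in>A. \<Sum>c\<in>{c \<in> A. c < a}. f a c) = (\<Sum>c\<in>A. \<Sum>a\<in>{a \<in> A. c < a}. f a c)"
    using assms(1) assms(1) by (rule sum.swap_restrict)
  also have "\<dots> = (\<Sum>a\<in>A. \<Sum>c\<in>{c \<in> A. a < c}. f a c)"
    by (subst sym) (rule refl)
  finally show ?thesis by (simp add: mult_2)
qed

lemma power2_sum_offdiag: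
  fixes r :: "'i \<Rightarrow> 'a::comm_semiring_1"
  assumes "finite A"
  shows "(\<Sum>a\<in>A. r a) ^ 2 = (\<Sum>a\<in>A. \<Sum>c\<in>A - {a}. r a * r c) + (\<Sum>a\<in>A. r a ^ 2)"
proof -
  have "(\<Sum>a\<in>A. r a) ^ 2 = (\<Sum>a\<in>A. r a * r a + (\<Sum>c\<in>A - {a}. r a * r c))"
    using assms by (simp add: power2_eq_square sum_product sum.remove)
  then show ?thesis
    by (simp add: sum.distrib power2_eq_square add.commute)
qed

lemma fps_X_power_dvd_nth: "fps_X ^ k dvd f \<Longrightarrow> n < k \<Longrightarrow> f $ n = 0"
  by (elim dvdE) (simp add: fps_X_power_mult_nth)

lemma prod_one_minus_fps_X_power_nth_0:
  assumes "0 \<notin> K"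
  shows "(\<Prod>k\<in>K. 1 - fps_X ^ k :: 'a::comm_ring_1 fps) $ 0 = 1"
  using assms by (induction K rule: infinite_finite_induct) auto

lemma prod_one_minus_fps_X_power_nth:
  assumes "finite K"
  shows "(\<Prod>k\<in>K. 1 - fps_X ^ k :: 'a::comm_ring_1 fps) $ m = (\<Sum>B\<in>{B\<in>Pow K. \<Sum>B = m}. (-1) ^ card B)"
proof -
  have "(\<Prod>k\<in>K. 1 - fps_X ^ k :: 'a fps) = (\<Prod>k\<in>K. - (fps_X ^ k) + 1)" by simp
  also have "\<dots> = (\<Sum>B\<in>Pow K. (\<Prod>k\<in>B. - (fps_X ^ k)) * (\<Prod>k\<in>K-B. 1))"
    by (rule prod_add[OF assms])
  also have "\<dots> = (\<Sum>B\<in>Pow K. fps_const ((-1) ^ card B) * fps_X ^ \<Sum>B)"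
  proof (rule sum.cong[OF refl])
    fix B
    have "(\<Prod>k\<in>B. - (fps_X ^ k) :: 'a fps) = (\<Prod>k\<in>B. (-1) * fps_X ^ k)" by simp
    also have "\<dots> = (-1) ^ card B * fps_X ^ \<Sum>B"
      by (simp only: prod.distrib prod_constant power_sum)
    also have "(-1 :: 'a fps) ^ card B = fps_const ((-1) ^ card B)"
      by (simp only: fps_const_power[symmetric] fps_const_neg[symmetric] fps_const_1_eq_1)
    finally show "(\<Prod>k\<in>B. - (fps_X ^ k)) * (\<Prod>k\<in>K-B. 1) = fps_const ((-1) ^ card B) * (fps_X ^ \<Sum>B :: 'a fps)"
      by simp
  qed
  finally have "(\<Prod>k\<in>K. 1 - fps_X ^ k :: 'a fps) $ m = (\<Sum>B\<in>Pow K. if \<Sum>B = m then (-1) ^ card B else 0)"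
    by (simp add: fps_sum_nth eq_commute[of m] if_distrib[of "(*) _"] cong: if_cong)
  also have "\<dots> = (\<Sum>B\<in>{B\<in>Pow K. \<Sum>B = m}. (-1) ^ card B)"
    using assms by (subst sum.inter_filter) auto
  finally show ?thesis .
qed

definition fps_multiples :: "nat \<Rightarrow> 'a::comm_ring_1 fps" where
  "fps_multiples k = Abs_fps (\<lambda>n. of_bool (0 < n \<and> k dvd n))"

lemma fps_multiples_nth: "fps_multiples k $ n = of_bool (0 < n \<and> k dvd n)"
  by (simp add: fps_multiples_def)

lemma one_minus_fps_X_power_mult_multiples:
  assumes "k \<ge> 1"
  shows "(1 - fps_X ^ k) * fps_multiples k = (fps_X ^ k :: 'a::comm_ring_1 fps)"
proof (rule fps_ext)
  fix n
  have nth: "((1 - fps_X ^ k) * fps_multiples k) $ n = fps_multiples k $ n - (fps_X ^ k * fps_multiples k) $ n"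
    by (simp add: algebra_simps)
  show "((1 - fps_X ^ k) * fps_multiples k) $ n = (fps_X ^ k :: 'a fps) $ n"
  proof (cases "n < k")
    case True
    then have "\<not> (0 < n \<and> k dvd n)" by (auto dest: dvd_imp_le)
    then show ?thesis using True unfolding nth by (simp add: fps_X_power_mult_nth fps_multiples_nth)
  next
    case False
    then have "k dvd n \<longleftrightarrow> k dvd (n - k)" by (simp add: dvd_minus_self)
    then show ?thesis using False assms unfolding nth by (simp add: fps_X_power_mult_nth fps_multiples_nth)
  qed
qed

section \<open>The generating function of the smallest part\<close>

definition tail_prod :: "nat \<Rightarrow> nat \<Rightarrow> 'a::comm_ring_1 fps" where
  "tail_prod N s = (\<Prod>k\<in>{s<..N}. 1 - fps_X ^ k)"

definition min_part_gf :: "nat \<Rightarrow> nat \<Rightarrow> 'a::comm_ring_1 fps" where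
  "min_part_gf N s = fps_X ^ s * tail_prod N s"

definition min_part_poly :: "nat \<Rightarrow> 'a::comm_ring_1 fps poly" where
  "min_part_poly N = (\<Sum>s\<le>N. monom (min_part_gf N s) s)"

lemma coeff_min_part_poly: "coeff (min_part_poly N) s = (if s \<le> N then min_part_gf N s else 0)"
  unfolding min_part_poly_def coeff_sum coeff_monom by simp

lemma min_part_gf_step:
  assumes "1 \<le> s" "s \<le> N"
  shows "fps_X * min_part_gf N (s - 1) = (1 - fps_X ^ s) * (min_part_gf N s :: 'a::comm_ring_1 fps)"
proof -
  have "{s-1<..N} = insert s {s<..N}" using assms by auto
  then have tail_step: "tail_prod N (s - 1) = (1 - fps_X ^ s) * (tail_prod N s :: 'a fps)"
    by (simp add: tail_prod_def)
  have "fps_X * min_part_gf N (s - 1) = (fps_X * fps_X ^ (s - 1)) * (tail_prod N (s - 1) :: 'a fps)"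
    by (simp add: min_part_gf_def mult.assoc)
  also have "fps_X * fps_X ^ (s - 1) = (fps_X ^ s :: 'a fps)"
    using assms by (simp flip: power_Suc)
  finally show ?thesis
    unfolding tail_step by (simp add: min_part_gf_def mult_ac)
qed

lemma min_part_poly_functional_equation:
  "min_part_poly N * [:1, - fps_X:] =
     pcompose (min_part_poly N) [:0, fps_X:] - monom (fps_X ^ Suc N :: 'a::comm_ring_1 fps) (Suc N)"
proof (rule poly_eqI)
  fix t
  have coeff_mult_linear: "coeff (p * [:1, - fps_X:]) t = coeff p t - (if t = 0 then 0 else fps_X * coeff p (t - 1))"
    for p :: "'a fps poly"
    by (cases t) (simp_all add: coeff_pCons)
  have "min_part_gf N N = (fps_X ^ N :: 'a fps)"
    by (simp add: min_part_gf_def tail_prod_def)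
  then show "coeff (min_part_poly N * [:1, - fps_X:]) t =
    coeff (pcompose (min_part_poly N) [:0, fps_X:] - monom (fps_X ^ Suc N :: 'a fps) (Suc N)) t"
    unfolding coeff_mult_linear using min_part_gf_step[of t N]
    by (cases "t = 0"; cases "t \<le> N")
       (auto simp: coeff_pcompose_scale coeff_min_part_poly poly_0_coeff_0 algebra_simps dest: sym)
qed

lemma pcompose_min_part_poly_scale_cong:
  "[:fps_X ^ Suc N:] dvd pcompose (min_part_poly N) [:0, (fps_X ^ j):] * [:1, - (fps_X ^ Suc j):]
     - pcompose (min_part_poly N) [:0, (fps_X ^ Suc j :: 'a::comm_ring_1 fps):]"
proof -
  let ?P = "min_part_poly N :: 'a fps poly"
  have "pcompose [:1, - fps_X:] [:0, (fps_X ^ j):] = [:1, - (fps_X ^ Suc j :: 'a fps):]"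
    by (simp add: pcompose_pCons)
  then have "pcompose ?P [:0, (fps_X ^ j):] * [:1, - (fps_X ^ Suc j):]
      = pcompose (?P * [:1, - fps_X:]) [:0, (fps_X ^ j):]"
    by (simp only: pcompose_mult)
  also have "\<dots> = pcompose ?P [:0, (fps_X ^ Suc j):] - monom (fps_X ^ Suc N * (fps_X ^ j) ^ Suc N) (Suc N)"
    unfolding min_part_poly_functional_equation pcompose_diff pcompose_scale_scale pcompose_monom_scale
    by simp
  also have "monom (fps_X ^ Suc N * (fps_X ^ j) ^ Suc N) (Suc N)
      = [:fps_X ^ Suc N:] * monom ((fps_X ^ j) ^ Suc N :: 'a fps) (Suc N)"
    by (simp add: smult_monom)
  finally have "pcompose ?P [:0, (fps_X ^ j):] * [:1, - (fps_X ^ Suc j):] - pcompose ?P [:0, (fps_X ^ Suc j):]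
      = [:fps_X ^ Suc N:] * - monom ((fps_X ^ j) ^ Suc N) (Suc N)"
    by simp
  then show ?thesis by (metis dvd_triv_left)
qed

lemma min_part_poly_mult_prod_cong:
  "[:fps_X ^ Suc N:] dvd min_part_poly N * (\<Prod>k\<in>{1..j}. [:1, - (fps_X ^ k):])
     - pcompose (min_part_poly N) [:0, (fps_X ^ j :: 'a::comm_ring_1 fps):]"
proof (induction j)
  case 0
  then show ?case by simp
next
  case (Suc j)
  let ?P = "min_part_poly N :: 'a fps poly"
  let ?B = "pcompose ?P [:0, (fps_X ^ j):]"
  let ?C = "pcompose ?P [:0, (fps_X ^ Suc j):]"
  let ?L = "[:1, - (fps_X ^ Suc j :: 'a fps):]"
  have regroup: "a * l - c = (a - b) * l + (b * l - c)" for a b l c :: "'a fps poly"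
    by (simp add: algebra_simps)
  have prod_Suc: "(\<Prod>k\<in>{1..Suc j}. [:1, - (fps_X ^ k):]) = (\<Prod>k\<in>{1..j}. [:1, - (fps_X ^ k):]) * ?L"
    by (simp only: prod.cl_ivl_Suc) simp
  have "?P * (\<Prod>k\<in>{1..Suc j}. [:1, - (fps_X ^ k):]) - ?C
      = (?P * (\<Prod>k\<in>{1..j}. [:1, - (fps_X ^ k):]) - ?B) * ?L + (?B * ?L - ?C)"
    unfolding prod_Suc mult.assoc[symmetric] by (rule regroup)
  then show ?case
    using Suc.IH pcompose_min_part_poly_scale_cong[of N j] by (simp only:) (intro dvd_add dvd_mult2)
qed

lemma pcompose_min_part_poly_cong:
  "[:fps_X ^ Suc N:] dvd pcompose (min_part_poly N) [:0, (fps_X ^ N):] - [:min_part_gf N 0 :: 'a::comm_ring_1 fps:]"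
proof -
  have "pcompose (min_part_poly N) [:0, (fps_X ^ N):] = (\<Sum>s\<le>N. monom (min_part_gf N s * (fps_X ^ N) ^ s :: 'a fps) s)"
    unfolding min_part_poly_def pcompose_sum pcompose_monom_scale ..
  also have "{..N} = insert 0 {1..N}" by auto
  finally have expand: "pcompose (min_part_poly N) [:0, (fps_X ^ N):] - [:min_part_gf N 0:]
      = (\<Sum>s\<in>{1..N}. monom (min_part_gf N s * (fps_X ^ N) ^ s :: 'a fps) s)"
    by (simp add: monom_0)
  have summand: "[:fps_X ^ Suc N:] dvd monom (min_part_gf N s * (fps_X ^ N) ^ s :: 'a fps) s"
    if "s \<in> {1..N}" for s
  proof (rule const_dvd_monom)
    have "1 \<le> s" using that by simp
    then have "N \<le> N * s" by simp
    then have "Suc N \<le> s + N * s" using \<open>1 \<le> s\<close> by linarith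
    then have "fps_X ^ Suc N dvd (fps_X ^ (s + N * s) :: 'a fps)" by (rule le_imp_power_dvd)
    then have "fps_X ^ Suc N dvd fps_X ^ (s + N * s) * (tail_prod N s :: 'a fps)" by (rule dvd_mult2)
    also have "\<dots> = min_part_gf N s * (fps_X ^ N) ^ s"
      by (simp add: min_part_gf_def power_add power_mult mult_ac)
    finally show "fps_X ^ Suc N dvd (min_part_gf N s * (fps_X ^ N) ^ s :: 'a fps)" .
  qed
  show ?thesis unfolding expand by (rule dvd_sum) (rule summand)
qed

lemma min_part_poly_mult_prod_cong_euler:
  "[:fps_X ^ Suc N:] dvd min_part_poly N * (\<Prod>k\<in>{1..N}. [:1, - (fps_X ^ k):])
     - [:\<Prod>k\<in>{1..N}. 1 - fps_X ^ k :: 'a::comm_ring_1 fps:]"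
proof -
  have "{0<..N} = {1..N}" by auto
  then have euler: "min_part_gf N 0 = (\<Prod>k\<in>{1..N}. 1 - fps_X ^ k :: 'a fps)"
    by (simp add: min_part_gf_def tail_prod_def)
  let ?B = "pcompose (min_part_poly N) [:0, (fps_X ^ N :: 'a fps):]"
  have decomp: "min_part_poly N * (\<Prod>k\<in>{1..N}. [:1, - (fps_X ^ k):]) - [:\<Prod>k\<in>{1..N}. 1 - fps_X ^ k:]
      = (min_part_poly N * (\<Prod>k\<in>{1..N}. [:1, - (fps_X ^ k):]) - ?B) + (?B - [:min_part_gf N 0:])"
    unfolding euler by simp
  show ?thesis
    unfolding decomp by (rule dvd_add[OF min_part_poly_mult_prod_cong pcompose_min_part_poly_cong])
qed

lemma min_part_second_moment_cong:
  fixes N :: nat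
  defines "L \<equiv> (\<Sum>a\<in>{1..N}. fps_multiples a) :: 'a::idom fps"
    and "M \<equiv> (\<Sum>a\<in>{1..N}. \<Sum>c\<in>{1..N} - {a}. fps_multiples a * fps_multiples c) :: 'a fps"
  shows "fps_X ^ Suc N dvd (\<Sum>s\<le>N. of_nat (s ^ 2) * min_part_gf N s) - (2 * L ^ 2 - M + L)"
proof -
  let ?E = "\<Prod>k\<in>{1..N}. 1 - fps_X ^ k :: 'a fps"
  have multiples: "(1 - fps_X ^ k) * fps_multiples k = (fps_X ^ k :: 'a fps)" if "k \<in> {1..N}" for k
    using that by (simp add: one_minus_fps_X_power_mult_multiples)
  have "?E $ 0 * 1 = 1"
    by (simp add: prod_one_minus_fps_X_power_nth_0)
  then have unit: "?E * fps_right_inverse ?E 1 = 1"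
    by (rule fps_right_inverse)
  let ?G = "\<Prod>k\<in>{1..N}. [:1, - (fps_X ^ k :: 'a fps):]"
  have "poly ?G 1 = ?E"
    by (simp add: poly_prod)
  moreover have "poly (pderiv ?G) 1 = - ?E * L"
    unfolding L_def by (rule poly_pderiv_prod_linear_at_1) (simp_all add: multiples)
  moreover have "poly (pderiv (pderiv ?G)) 1 = ?E * M"
    unfolding M_def by (rule poly_pderiv_pderiv_prod_linear_at_1) (simp_all add: multiples)
  ultimately show ?thesis
    using second_moment_cong[OF min_part_poly_mult_prod_cong_euler unit]
    unfolding min_part_poly_def poly_pderiv_monom_sum_at_1 by simp
qed

section \<open>Distinct partitions grouped by their smallest part\<close>

lemma distinct_partitions_subset_Pow: "distinct_partitions n \<subseteq> Pow {1..n}"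
proof
  fix P assume "P \<in> distinct_partitions n"
  then have P: "finite P" "0 \<notin> P" "\<Sum>P = n" by (auto simp: distinct_partitions_def)
  have "x \<le> n" if "x \<in> P" for x
    using P that member_le_sum[of x P "\<lambda>x. x"] by auto
  with P(2) show "P \<in> Pow {1..n}"
    by (auto simp: Suc_le_eq intro: Nat.gr0I)
qed

lemma distinct_partitions_with_Min:
  assumes s: "s \<in> {1..n}"
  shows "{P \<in> distinct_partitions n. Min P = s} = insert s ` {B \<in> Pow {s<..n}. \<Sum>B = n - s}"
proof (intro equalityI subsetI)
  fix P assume "P \<in> {P \<in> distinct_partitions n. Min P = s}"
  then have P: "finite P" "P \<subseteq> {1..n}" "\<Sum>P = n" "Min P = s"
    using distinct_partitions_subset_Pow[of n] by (auto simp: distinct_partitions_def)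
  moreover have "P \<noteq> {}"
    using P(3) s by auto
  ultimately have "s \<in> P"
    using Min_in by blast
  have "P - {s} \<subseteq> {s<..n}"
    using P(2,4) Min_le[OF P(1)] by fastforce
  moreover have "\<Sum>(P - {s}) = n - s"
    using P(1,3) \<open>s \<in> P\<close> by (simp add: sum_diff1_nat)
  moreover have "P = insert s (P - {s})"
    using \<open>s \<in> P\<close> by auto
  ultimately show "P \<in> insert s ` {B \<in> Pow {s<..n}. \<Sum>B = n - s}" by blast
next
  fix P assume "P \<in> insert s ` {B \<in> Pow {s<..n}. \<Sum>B = n - s}"
  then obtain B where B: "B \<subseteq> {s<..n}" "\<Sum>B = n - s" and P: "P = insert s B" by auto
  have "finite B" "s \<notin> B" using B(1) finite_subset by auto
  moreover have "Min P = s"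
    unfolding P using \<open>finite B\<close> B(1) by (intro Min_eqI) auto
  ultimately show "P \<in> {P \<in> distinct_partitions n. Min P = s}"
    using B s unfolding P distinct_partitions_def by auto
qed

lemma min_part_gf_nth:
  assumes "s \<le> n"
  shows "(min_part_gf n s :: 'a::comm_ring_1 fps) $ n = (\<Sum>B\<in>{B \<in> Pow {s<..n}. \<Sum>B = n - s}. (-1) ^ card B)"
  using assms
  by (simp add: min_part_gf_def tail_prod_def fps_X_power_mult_nth prod_one_minus_fps_X_power_nth)

lemma sum_distinct_partitions_by_Min:
  fixes w :: "nat \<Rightarrow> 'a::comm_ring_1"
  assumes "n \<ge> 1"
  shows "(\<Sum>P\<in>distinct_partitions n. (-1) ^ (nparts P - 1) * w (spart P))
    = (\<Sum>s\<in>{1..n}. w s * min_part_gf n s $ n)"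
proof -
  have fin: "finite (distinct_partitions n)"
    using distinct_partitions_subset_Pow by (rule finite_subset) simp
  have "Min ` distinct_partitions n \<subseteq> {1..n}"
  proof
    fix s assume "s \<in> Min ` distinct_partitions n"
    then obtain P where P: "P \<in> distinct_partitions n" "s = Min P" ..
    then have "P \<noteq> {}" "finite P" using assms by (auto simp: distinct_partitions_def)
    then show "s \<in> {1..n}" using P distinct_partitions_subset_Pow[of n] Min_in by blast
  qed
  then have "(\<Sum>P\<in>distinct_partitions n. (-1) ^ (nparts P - 1) * w (spart P))
      = (\<Sum>s\<in>{1..n}. \<Sum>P\<in>{P \<in> distinct_partitions n. Min P = s}. (-1) ^ (nparts P - 1) * w (spart P))"
    by (rule sum.group[OF fin finite_atLeastAtMost, symmetric])
  also have "\<dots> = (\<Sum>s\<in>{1..n}. \<Sum>P\<in>{P \<in> distinct_partitions n. Min P = s}. (-1) ^ (card P - 1) * w s)"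
    by (rule sum.cong[OF refl], rule sum.cong[OF refl]) (simp add: nparts_def spart_def)
  also have "\<dots> = (\<Sum>s\<in>{1..n}. \<Sum>B\<in>{B \<in> Pow {s<..n}. \<Sum>B = n - s}. (-1) ^ card B * w s)"
  proof (rule sum.cong[OF refl])
    fix s assume s: "s \<in> {1..n}"
    have "inj_on (insert s) {B \<in> Pow {s<..n}. \<Sum>B = n - s}"
      by (rule inj_onI) (metis insert_ident PowD greaterThanAtMost_iff less_irrefl mem_Collect_eq subsetD)
    moreover have "card (insert s B) - 1 = card B" if "B \<subseteq> {s<..n}" for B
      using that finite_subset[OF that] by (subst card_insert_disjoint) auto
    ultimately show "(\<Sum>P\<in>{P \<in> distinct_partitions n. Min P = s}. (-1) ^ (card P - 1) * w s)
        = (\<Sum>B\<in>{B \<in> Pow {s<..n}. \<Sum>B = n - s}. (-1) ^ card B * w s)"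
      unfolding distinct_partitions_with_Min[OF s] by (simp add: sum.reindex)
  qed
  also have "\<dots> = (\<Sum>s\<in>{1..n}. w s * min_part_gf n s $ n)"
    by (simp add: min_part_gf_nth sum_distrib_left mult.commute)
  finally show ?thesis .
qed

section \<open>Partitions with two part sizes and divisor sums\<close>

definition splits :: "nat \<Rightarrow> nat \<Rightarrow> nat \<Rightarrow> nat set" where
  "splits n a b = {i \<in> {0<..<n}. a dvd i \<and> b dvd n - i}"

lemma finite_splits [simp]: "finite (splits n a b)"
  by (simp add: splits_def)

lemma fps_multiples_mult_nth:
  "(fps_multiples a * fps_multiples b :: 'a::comm_ring_1 fps) $ n = of_nat (card (splits n a b))"
proof -
  have "(fps_multiples a * fps_multiples b :: 'a fps) $ n
      = (\<Sum>i\<in>{0..n}. of_bool (0 < i \<and> a dvd i \<and> 0 < n - i \<and> b dvd n - i))"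
    unfolding fps_mult_nth fps_multiples_nth by (intro sum.cong refl) auto
  also have "\<dots> = of_nat (card ({0..n} \<inter> {i. 0 < i \<and> a dvd i \<and> 0 < n - i \<and> b dvd n - i}))"
    by (simp only: sum_of_bool_eq finite_atLeastAtMost)
  also have "{0..n} \<inter> {i. 0 < i \<and> a dvd i \<and> 0 < n - i \<and> b dvd n - i} = splits n a b"
    by (auto simp: splits_def)
  finally show ?thesis .
qed

lemma card_splits_commute: "card (splits n a b) = card (splits n b a)"
proof (rule bij_betw_same_card)
  show "bij_betw (\<lambda>i. n - i) (splits n a b) (splits n b a)"
    by (rule bij_betw_byWitness[where f' = "\<lambda>i. n - i"]) (auto simp: splits_def)
qed

lemma card_splits_diag:
  assumes "a \<ge> 1"
  shows "card (splits n a a) = (if a dvd n \<and> n > 0 then n div a - 1 else 0)"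
proof (cases "a dvd n")
  case True
  then obtain m where n: "n = a * m" ..
  have "splits n a a = (\<lambda>j. a * j) ` {0<..<m}"
    using assms unfolding splits_def n
    by (auto simp: image_iff dvd_def) (metis diff_mult_distrib2)
  moreover have "inj_on (\<lambda>j. a * j) {0<..<m}"
    using assms by (intro inj_onI) simp
  ultimately show ?thesis
    using assms n by (simp add: card_image)
next
  case False
  have "a dvd n" if "i < n" "a dvd i" "a dvd n - i" for i
    using dvd_add[OF that(2,3)] that(1) by simp
  then have "splits n a a = {}"
    using False by (auto simp: splits_def)
  then show ?thesis using False by simp
qed

text \<open>A partition with exactly the two part sizes \<open>a < b\<close> is determined by the total \<open>i\<close> of
  its parts equal to \<open>a\<close>.\<close>

definition two_size_triples :: "nat \<Rightarrow> (nat \<times> nat \<times> nat) set" where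
  "two_size_triples n = (SIGMA a:{1..n}. SIGMA b:{b \<in> {1..n}. a < b}. splits n a b)"

definition two_size_partition :: "nat \<Rightarrow> nat \<times> nat \<times> nat \<Rightarrow> nat multiset" where
  "two_size_partition n = (\<lambda>(a, b, i). replicate_mset (i div a) a + replicate_mset ((n - i) div b) b)"

definition two_size_triple :: "nat multiset \<Rightarrow> nat \<times> nat \<times> nat" where
  "two_size_triple M = (let a = Min (set_mset M) in (a, Max (set_mset M), a * count M a))"

lemma multiset_two_elements:
  assumes "set_mset M = {a, b}" "a \<noteq> b"
  shows "M = replicate_mset (count M a) a + replicate_mset (count M b) b"
proof (rule multiset_eqI)
  fix x
  show "count M x = count (replicate_mset (count M a) a + replicate_mset (count M b) b) x"
    using assms by (cases "x = a \<or> x = b") (auto simp: not_in_iff[symmetric])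
qed

lemma two_size_partition_triple:
  assumes "t \<in> two_size_triples n"
  shows "two_size_partition n t \<in> {M \<in> partitions n. card (set_mset M) = 2}"
    and "two_size_triple (two_size_partition n t) = t"
proof -
  obtain a b i where t: "t = (a, b, i)" by (cases t)
  from assms have ab: "1 \<le> a" "a < b" and i: "0 < i" "i < n" "a dvd i" "b dvd n - i"
    unfolding t two_size_triples_def splits_def by auto
  define M where "M = replicate_mset (i div a) a + replicate_mset ((n - i) div b) b"
  have "i div a > 0" "(n - i) div b > 0"
    using ab i by (simp_all add: div_greater_zero_iff dvd_imp_le)
  then have set_M: "set_mset M = {a, b}" and count_M: "count M a = i div a"
    using ab by (auto simp: M_def)
  have "sum_mset M = i + (n - i)"
    using i by (simp add: M_def)
  then have "M \<in> partitions n"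
    using set_M ab i by (auto simp: partitions_def)
  then show "two_size_partition n t \<in> {M \<in> partitions n. card (set_mset M) = 2}"
    using set_M ab by (simp add: t two_size_partition_def M_def[symmetric])
  show "two_size_triple (two_size_partition n t) = t"
    using set_M count_M ab i
    by (simp add: t two_size_partition_def two_size_triple_def M_def[symmetric])
qed

lemma two_size_triple_partition:
  assumes "M \<in> {M \<in> partitions n. card (set_mset M) = 2}"
  shows "two_size_triple M \<in> two_size_triples n"
    and "two_size_partition n (two_size_triple M) = M"
proof -
  from assms have zero: "0 \<notin># M" and sum_M: "sum_mset M = n" and "card (set_mset M) = 2"
    unfolding partitions_def by auto
  then obtain a b where ab: "set_mset M = {a, b}" "a < b"
    by (auto simp: card_2_iff) (metis insert_commute linorder_neqE_nat)
  define ca cb where "ca = count M a" and "cb = count M b"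
  have M: "M = replicate_mset ca a + replicate_mset cb b"
    unfolding ca_def cb_def using multiset_two_elements[OF ab(1)] ab(2) by simp
  have pos: "1 \<le> a" "ca > 0" "cb > 0"
    using zero ab by (auto simp: ca_def cb_def Suc_le_eq)
  have n: "n = ca * a + cb * b"
    using sum_M M by simp
  have triple: "two_size_triple M = (a, b, a * ca)"
    using ab by (simp add: two_size_triple_def ca_def)
  have "b \<le> cb * b" using pos by simp
  then have "b \<le> n" using n by linarith
  have "a * ca < n" "n - a * ca = b * cb"
    using pos ab(2) n by (auto simp: mult.commute)
  then show "two_size_triple M \<in> two_size_triples n"
    unfolding triple two_size_triples_def splits_def using pos ab(2) \<open>b \<le> n\<close> by auto
  show "two_size_partition n (two_size_triple M) = M"
    using pos ab(2) \<open>n - a * ca = b * cb\<close> unfolding triple by (simp add: two_size_partition_def M[symmetric])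
qed

lemma card_two_size_triples: "card (two_size_triples n) = p2 n"
  unfolding p2_def
proof (rule bij_betw_same_card, rule bij_betw_byWitness[where f' = two_size_triple])
  show "\<forall>t\<in>two_size_triples n. two_size_triple (two_size_partition n t) = t"
    "two_size_partition n ` two_size_triples n \<subseteq> {M \<in> partitions n. card (set_mset M) = 2}"
    using two_size_partition_triple by auto
  show "\<forall>M\<in>{M \<in> partitions n. card (set_mset M) = 2}. two_size_partition n (two_size_triple M) = M"
    "two_size_triple ` {M \<in> partitions n. card (set_mset M) = 2} \<subseteq> two_size_triples n"
    using two_size_triple_partition by auto
qed

lemma offdiag_multiples_nth:
  "(\<Sum>a\<in>{1..n}. \<Sum>c\<in>{1..n} - {a}. fps_multiples a * fps_multiples c :: 'a::comm_ring_1 fps) $ n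
    = 2 * of_nat (p2 n)"
proof -
  have "(\<Sum>a\<in>{1..n}. \<Sum>c\<in>{1..n} - {a}. fps_multiples a * fps_multiples c :: 'a fps) $ n
      = of_nat (\<Sum>a\<in>{1..n}. \<Sum>c\<in>{1..n} - {a}. card (splits n a c))"
    by (simp add: fps_sum_nth fps_multiples_mult_nth)
  also have "(\<Sum>a\<in>{1..n}. \<Sum>c\<in>{1..n} - {a}. card (splits n a c))
      = 2 * (\<Sum>a\<in>{1..n}. \<Sum>c\<in>{c \<in> {1..n}. a < c}. card (splits n a c))"
    by (rule sum_offdiag_symmetric) (simp_all add: card_splits_commute)
  also have "(\<Sum>a\<in>{1..n}. \<Sum>c\<in>{c \<in> {1..n}. a < c}. card (splits n a c)) = card (two_size_triples n)"
    by (simp add: two_size_triples_def)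
  finally show ?thesis
    by (simp add: card_two_size_triples)
qed

lemma atLeastAtMost_Int_divisors:
  fixes n :: nat
  assumes "n > 0"
  shows "{1..n} \<inter> {d. d dvd n} = {d. d dvd n}"
  using assms by (auto intro: dvd_imp_le Suc_leI dvd_pos_nat)

lemma sum_divisors_quotient:
  fixes n :: nat
  assumes "n > 0"
  shows "(\<Sum>d | d dvd n. n div d) = sigma n"
  unfolding sigma_def
  by (rule sum.reindex_bij_witness[of _ "\<lambda>d. n div d" "\<lambda>d. n div d"])
     (use assms in auto)

lemma diag_multiples_nth:
  fixes n :: nat
  assumes "n > 0"
  shows "(2 * (\<Sum>a\<in>{1..n}. fps_multiples a ^ 2) + (\<Sum>a\<in>{1..n}. fps_multiples a) :: 'a::comm_ring_1 fps) $ n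
    = 2 * of_nat (sigma n) - of_nat (ndiv n)"
proof -
  have squares: "(\<Sum>a\<in>{1..n}. fps_multiples a ^ 2 :: 'a fps) $ n = (\<Sum>a\<in>{1..n}. of_nat (card (splits n a a)))"
    by (simp add: fps_sum_nth power2_eq_square fps_multiples_mult_nth)
  have linear: "(\<Sum>a\<in>{1..n}. fps_multiples a :: 'a fps) $ n = (\<Sum>a\<in>{1..n}. of_bool (a dvd n))"
    using assms by (simp add: fps_sum_nth fps_multiples_nth)
  have "(2 * (\<Sum>a\<in>{1..n}. fps_multiples a ^ 2) + (\<Sum>a\<in>{1..n}. fps_multiples a) :: 'a fps) $ n
      = 2 * (\<Sum>a\<in>{1..n}. fps_multiples a ^ 2 :: 'a fps) $ n + (\<Sum>a\<in>{1..n}. fps_multiples a :: 'a fps) $ n"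
    by (simp only: mult_2 fps_add_nth)
  also have "\<dots> = (\<Sum>a\<in>{1..n}. 2 * of_nat (card (splits n a a)) + of_bool (a dvd n))"
    unfolding squares linear by (simp only: sum.distrib sum_distrib_left)
  also have "\<dots> = (\<Sum>a\<in>{1..n}. of_bool (a dvd n) * (2 * of_nat (n div a) - 1))"
  proof (intro sum.cong refl)
    fix a assume a: "a \<in> {1..n}"
    show "2 * of_nat (card (splits n a a)) + of_bool (a dvd n)
        = (of_bool (a dvd n) * (2 * of_nat (n div a) - 1) :: 'a)"
    proof (cases "a dvd n")
      case True
      then have "1 \<le> n div a"
        using a assms by (simp add: div_greater_zero_iff Suc_le_eq dvd_imp_le)
      then show ?thesis
        using True a assms by (simp add: card_splits_diag algebra_simps)
    qed (use a in \<open>simp add: card_splits_diag\<close>)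
  qed
  also have "\<dots> = (\<Sum>d\<in>{1..n} \<inter> {d. d dvd n}. 2 * of_nat (n div d) - 1)"
    by (rule sum_of_bool_mult_eq) simp
  also have "\<dots> = (\<Sum>d | d dvd n. 2 * of_nat (n div d) - 1)"
    using atLeastAtMost_Int_divisors[OF assms] by simp
  also have "\<dots> = 2 * of_nat (sigma n) - of_nat (ndiv n)"
    using assms
    by (simp add: sum_subtractf sum_distrib_left ndiv_def flip: sum_divisors_quotient)
  finally show ?thesis .
qed

theorem mainTheorem7:
  fixes n :: nat
  assumes "n \<ge> 1"
  shows "(\<Sum>P\<in>distinct_partitions n. (-1::int) ^ (nparts P - 1) * int (spart P) ^ 2)
         = 2 * int (sigma n) - int (ndiv n) + 2 * int (p2 n)"
proof -
  from assms have "n > 0" by simp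
  let ?L = "\<Sum>a\<in>{1..n}. fps_multiples a :: int fps"
  let ?M = "\<Sum>a\<in>{1..n}. \<Sum>c\<in>{1..n} - {a}. fps_multiples a * fps_multiples c :: int fps"
  let ?S = "\<Sum>a\<in>{1..n}. fps_multiples a ^ 2 :: int fps"
  have "(\<Sum>P\<in>distinct_partitions n. (-1::int) ^ (nparts P - 1) * int (spart P) ^ 2)
      = (\<Sum>s\<in>{1..n}. int s ^ 2 * min_part_gf n s $ n)"
    by (rule sum_distinct_partitions_by_Min[OF assms])
  also have "\<dots> = (\<Sum>s\<le>n. of_nat (s ^ 2) * min_part_gf n s) $ n"
    by (simp add: fps_sum_nth atMost_atLeast0 sum.atLeast_Suc_atMost flip: of_nat_power)
  also have "\<dots> = (2 * ?L ^ 2 - ?M + ?L) $ n"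
    using fps_X_power_dvd_nth[OF min_part_second_moment_cong, of n n] by simp
  also have "2 * ?L ^ 2 - ?M + ?L = ?M + (2 * ?S + ?L)"
    by (simp add: power2_sum_offdiag algebra_simps)
  also have "(?M + (2 * ?S + ?L)) $ n = 2 * int (p2 n) + (2 * int (sigma n) - int (ndiv n))"
    unfolding fps_add_nth[of ?M] offdiag_multiples_nth diag_multiples_nth[OF \<open>n > 0\<close>] ..
  finally show ?thesis by simp
qed

end
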